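(* Let $E$ be a real Banach space, $K\subset E$ nonempty closed convex, $Y$ a real Banach space containing a closed, convex, pointed cone $C$ with nonempty interior, $f:E\times E\to Y$, $T:K\to\mathcal P(K)$, and $g\in\mathcal F$ satisfying H1–H4, with B1–B4 holding. For Algorithm SEML, at any iteration $k$ at which $v^k$ is defined and the algorithm does not stop: (i) $\ell(k)$ is well defined (the Armijo-type search for $\alpha_k$ terminates after finitely many steps), and consequently $y^k$ is well defined; (ii) if $x^k\neq z^k$, then $f(y^k,x^k)\notin-C$.
   Context: $C^+=\{z\in Y^*:\langle y,z\rangle\ge0\ \forall y\in C\}$; $y\preceq y'$ iff $y'-y\in C$; $C$-convex: $G(tx+(1-t)y)\preceq tG(x)+(1-t)G(y)$. $\mathcal F$: functions $g:E\to\mathbb R$ strictly convex, lower semicontinuous, Gâteaux differentiable with derivative $g'$. $D_g(x,y)=g(x)-g(y)-\langle x-y,g'(y)\rangle$; $v_g(x,t)=\inf\{D_g(y,x):\|y-x\|=t\}$. H1: level sets of $D_g(x,\cdot)$ bounded; H2: $\inf_{x\in A}v_g(x,t)>0$ for $t>0$, bounded $A$; H3: $g'$ uniformly continuous on bounded sets; H4: $\lim_{\|x\|\to\infty}(g(x)-\rho\|x-z\|)=\infty$ for all $z$, $\rho>0$. $\Pi^g_D(x)$: unique minimizer of $D_g(\cdot,x)$ over nonempty closed convex $D$. B1: $f(x,x)=0$. B2: $f$ uniformly continuous on bounded subsets of $E\times E$. B3: $f(x,\cdot)$ $C$-convex. B4: $T$ has nonempty closed convex values, is demiclosed ($x^k\rightharpoonup\bar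 x$, $d(x^k,T(x^k))\to0\Rightarrow\bar x\in T(\bar x)$), lower semicontinuous at each $\bar x\in K$ ($x^k\to\bar x$, $\bar y\in T(\bar x)\Rightarrow\exists y^k\in T(x^k)$, $y^k\to\bar y$), quasi $D_g$-nonexpansive ($S(x)=\Pi^g_{T(x)}(x)$ has a fixed point and $D_g(p,S(x))\le D_g(p,x)$ for all fixed points $p$ of $S$ and $x\in K$). $\mathrm{argmin}^C_w\{G(y):y\in Q\}$: $a\in Q$ with no $y\in Q$ such that $G(a)-G(y)\in\mathrm{int}(C)$. Algorithm SEML: parameters $v^0\in K$, $\delta,\theta\in(0,1)$, $\{\beta_k\}\subset[\hat\beta,\tilde\beta]$ with $0<\hat\beta\le\tilde\beta$, $\{\gamma_k\}\subset[\varepsilon,1]$, $\varepsilon\in(0,1]$, $\{e^k\}\subset\mathrm{int}(C)$, $e^k\to\bar e\in\mathrm{int}(C)$. Given $v^k$: $x^k=\Pi^g_{T(v^k)}(v^k)$; $z^k\in\mathrm{argmin}^C_w\{\beta_kf(x^k,y)+g(y)e^k-\langle y,g'(x^k)\rangle e^k:y\in T(v^k)\}$; stop if $z^k=v^k$; else $\ell(k)=\min\{\ell\ge0:-\beta_kf(y^\ell,x^k)+\beta_kf(y^\ell,z^k)+\delta D_g(z^k,x^k)e^k\notin\mathrm{int}(C)\}$, $y^\ell=\theta^\ell z^k+(1-\theta^\ell)x^k$; $\alpha_k=\theta^{\ell(k)}$; $y^k=\alpha_kz^k+(1-\alpha_k)x^k$; $H_k=\{y:f(y^k,y)\in-C\}$;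 $K_0=K\cap H_0$, $K_k=K_{k-1}\cap H_k$; $w^k=\Pi^g_{K_k}(x^k)$; $v^{k+1}=\Pi^g_{L_k\cap M_k\cap N_k}(v^0)$ with $L_k=\{z:\langle z-x^k,g'(x^k)-g'(w^k)\rangle\le-\gamma_kD_g(x^k,w^k)\}$, $M_k=\{z:\langle z-v^k,g'(v^k)-g'(x^k)\rangle\le-\gamma_kD_g(v^k,x^k)\}$, $N_k=\{z:\langle z-v^k,g'(v^0)-g'(v^k)\rangle\le0\}$. *)

theory Defs
  imports "HOL-Analysis.Analysis"
begin

text \<open>Dual pairing: elements of the dual space E* are bounded linear functionals
  of type 'e \<Rightarrow>L real; the pairing of y with phi is phi applied to y.\<close>

definition strictly_convex :: "('e::real_vector \<Rightarrow> real) \<Rightarrow> bool" where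
  "strictly_convex g \<longleftrightarrow>
     (\<forall>x y t. x \<noteq> y \<and> 0 < t \<and> t < 1 \<longrightarrow>
        g (t *\<^sub>R x + (1 - t) *\<^sub>R y) < t * g x + (1 - t) * g y)"

definition lsc :: "('e::topological_space \<Rightarrow> real) \<Rightarrow> bool" where
  "lsc g \<longleftrightarrow> (\<forall>x. \<forall>e>0. \<forall>\<^sub>F y in at x. g x - e < g y)"

definition gateaux_deriv :: "('e::real_normed_vector \<Rightarrow> real) \<Rightarrow> ('e \<Rightarrow> ('e \<Rightarrow>\<^sub>L real)) \<Rightarrow> bool" where
  "gateaux_deriv g g' \<longleftrightarrow>
     (\<forall>x h. ((\<lambda>t. (g (x + t *\<^sub>R h) - g x) / t) \<longlongrightarrow> blinfun_apply (g' x) h) (at 0))"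

definition bregman :: "('e::real_normed_vector \<Rightarrow> real) \<Rightarrow> ('e \<Rightarrow> ('e \<Rightarrow>\<^sub>L real)) \<Rightarrow> 'e \<Rightarrow> 'e \<Rightarrow> real" where
  "bregman g g' x y = g x - g y - blinfun_apply (g' y) (x - y)"

definition in_F :: "('e::real_normed_vector \<Rightarrow> real) \<Rightarrow> ('e \<Rightarrow> ('e \<Rightarrow>\<^sub>L real)) \<Rightarrow> bool" where
  "in_F g g' \<longleftrightarrow> strictly_convex g \<and> lsc g \<and> gateaux_deriv g g'"

definition H1 :: "('e::real_normed_vector \<Rightarrow> real) \<Rightarrow> ('e \<Rightarrow> ('e \<Rightarrow>\<^sub>L real)) \<Rightarrow> bool" where
  "H1 g g' \<longleftrightarrow> (\<forall>x r. bounded {y. bregman g g' x y \<le> r})"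

text \<open>H2: inf over x in A of v_g(x,t) > 0, where v_g(x,t) = inf {D_g(y,x) : norm(y-x)=t};
  written out as existence of a positive uniform lower bound (inf of empty set = +infinity).\<close>
definition H2 :: "('e::real_normed_vector \<Rightarrow> real) \<Rightarrow> ('e \<Rightarrow> ('e \<Rightarrow>\<^sub>L real)) \<Rightarrow> bool" where
  "H2 g g' \<longleftrightarrow> (\<forall>A t. bounded A \<and> 0 < t \<longrightarrow>
      (\<exists>c>0. \<forall>x\<in>A. \<forall>y. norm (y - x) = t \<longrightarrow> c \<le> bregman g g' y x))"

definition H3 :: "('e::real_normed_vector \<Rightarrow> real) \<Rightarrow> ('e \<Rightarrow> ('e \<Rightarrow>\<^sub>L real)) \<Rightarrow> bool" where
  "H3 g g' \<longleftrightarrow> (\<forall>A. bounded A \<longrightarrow> uniformly_continuous_on A g')"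

definition H4 :: "('e::real_normed_vector \<Rightarrow> real) \<Rightarrow> bool" where
  "H4 g \<longleftrightarrow> (\<forall>z. \<forall>\<rho>>0. filterlim (\<lambda>x. g x - \<rho> * norm (x - z)) at_top at_infinity)"

definition bproj :: "('e::real_normed_vector \<Rightarrow> real) \<Rightarrow> ('e \<Rightarrow> ('e \<Rightarrow>\<^sub>L real)) \<Rightarrow> 'e set \<Rightarrow> 'e \<Rightarrow> 'e" where
  "bproj g g' D x = (THE y. y \<in> D \<and> (\<forall>u\<in>D. bregman g g' y x \<le> bregman g g' u x))"

definition C_convex :: "'y::real_vector set \<Rightarrow> ('e::real_vector \<Rightarrow> 'y) \<Rightarrow> bool" where
  "C_convex C G \<longleftrightarrow> (\<forall>x y t. 0 \<le> t \<and> t \<le> 1 \<longrightarrow>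
      t *\<^sub>R G x + (1 - t) *\<^sub>R G y - G (t *\<^sub>R x + (1 - t) *\<^sub>R y) \<in> C)"

definition wargmin :: "'y::real_normed_vector set \<Rightarrow> ('e \<Rightarrow> 'y) \<Rightarrow> 'e set \<Rightarrow> 'e set" where
  "wargmin C G Q = {a\<in>Q. \<not> (\<exists>y\<in>Q. G a - G y \<in> interior C)}"

definition weak_conv :: "(nat \<Rightarrow> 'e::real_normed_vector) \<Rightarrow> 'e \<Rightarrow> bool" where
  "weak_conv xs x \<longleftrightarrow> (\<forall>\<phi> :: 'e \<Rightarrow>\<^sub>L real. (\<lambda>k. blinfun_apply \<phi> (xs k)) \<longlonglongrightarrow> blinfun_apply \<phi> x)"

definition B1 :: "('e \<Rightarrow> 'e \<Rightarrow> 'y::zero) \<Rightarrow> bool" where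
  "B1 f \<longleftrightarrow> (\<forall>x. f x x = 0)"

definition B2 :: "('e::real_normed_vector \<Rightarrow> 'e \<Rightarrow> 'y::real_normed_vector) \<Rightarrow> bool" where
  "B2 f \<longleftrightarrow> (\<forall>S :: ('e \<times> 'e) set. bounded S \<longrightarrow> uniformly_continuous_on S (\<lambda>(x, y). f x y))"

definition B3 :: "'y::real_vector set \<Rightarrow> ('e::real_vector \<Rightarrow> 'e \<Rightarrow> 'y) \<Rightarrow> bool" where
  "B3 C f \<longleftrightarrow> (\<forall>x. C_convex C (f x))"

definition B4 :: "('e::real_normed_vector \<Rightarrow> real) \<Rightarrow> ('e \<Rightarrow> ('e \<Rightarrow>\<^sub>L real)) \<Rightarrow> 'e set \<Rightarrow> ('e \<Rightarrow> 'e set) \<Rightarrow> bool" where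
  "B4 g g' K T \<longleftrightarrow>
     (\<forall>x\<in>K. T x \<noteq> {} \<and> closed (T x) \<and> convex (T x)) \<and>
     (\<forall>xs xb. (\<forall>k. xs k \<in> K) \<and> weak_conv xs xb \<and> (\<lambda>k. infdist (xs k) (T (xs k))) \<longlonglongrightarrow> 0
         \<longrightarrow> xb \<in> T xb) \<and>
     (\<forall>xs xb yb. xb \<in> K \<and> (\<forall>k. xs k \<in> K) \<and> xs \<longlonglongrightarrow> xb \<and> yb \<in> T xb
         \<longrightarrow> (\<exists>ys. (\<forall>k. ys k \<in> T (xs k)) \<and> ys \<longlonglongrightarrow> yb)) \<and>
     (let S = (\<lambda>x. bproj g g' (T x) x) in
        (\<exists>p\<in>K. S p = p) \<and>
        (\<forall>p\<in>K. S p = p \<longrightarrow> (\<forall>x\<in>K. bregman g g' p (S x) \<le> bregman g g' p x)))"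

end

theory Submission
  imports Defs
begin

text \<open>Since z is a weak minimizer of the regularized subproblem over T(v) and x = \<Pi>(v) is
  feasible for it, \<beta> f(x,z) + D e \<notin> int C with D = D_g(z,x).  As \<theta>^l \<rightarrow> 0 the trial points
  y_l tend to x, so the Armijo expression tends to \<beta> f(x,z) + \<delta> D e; if every trial were
  rejected this limit would lie in C, and adding (1 - \<delta>) D e \<in> int C would contradict the
  previous inequality.  At the accepted step, f(y,x) \<in> -C together with f(y,y) = 0 and the
  C-convexity of f(y,.) along the segment [x,z] \<ni> y would force f(y,z) \<in> C, putting the
  accepted Armijo expression into int C.  The one analytic input is x \<in> T(v), i.e. existence
  of Bregman projections onto nonempty closed convex sets: H4 bounds minimizing sequences, and
  H2 combined with the parallelogram-type identity for D_g at midpoints makes them Cauchy.\<close>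

lemma strictly_convex_imp_convex_on:
  assumes "strictly_convex g"
  shows "convex_on UNIV g"
proof (rule convex_onI)
  fix t :: real and x y :: 'a
  assume t: "0 < t" "t < 1"
  show "g ((1 - t) *\<^sub>R x + t *\<^sub>R y) \<le> (1 - t) * g x + t * g y"
  proof (cases "x = y")
    case True
    then show ?thesis by (simp flip: scaleR_add_left distrib_right)
  next
    case False
    with assms t have "g ((1 - t) *\<^sub>R x + (1 - (1 - t)) *\<^sub>R y) < (1 - t) * g x + (1 - (1 - t)) * g y"
      unfolding strictly_convex_def by (metis diff_gt_0_iff_gt diff_less_eq less_add_same_cancel1)
    then show ?thesis by simp
  qed
qed simp

lemma bregman_self [simp]: "bregman g g' x x = 0"
  by (simp add: bregman_def blinfun.zero_right)

lemma bregman_pos: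
  assumes sc: "strictly_convex g" and gd: "gateaux_deriv g g'" and "x \<noteq> y"
  shows "0 < bregman g g' y x"
proof -
  define m where "m = (1/2) *\<^sub>R y + (1 - 1/2) *\<^sub>R x"
  have quotient_lim: "((\<lambda>t. (g (x + t *\<^sub>R (y - x)) - g x) / t) \<longlongrightarrow> g' x (y - x)) (at_right 0)"
    using gd unfolding gateaux_deriv_def by (blast intro: tendsto_mono[OF at_le[OF subset_UNIV]])
  \<comment> \<open>convexity bounds the quotients for t < 1/2 by the one at t = 1/2, and strict convexity
    makes that one smaller than g y - g x\<close>
  have quotient_bound: "\<forall>\<^sub>F t in at_right 0. (g (x + t *\<^sub>R (y - x)) - g x) / t \<le> 2 * (g m - g x)"
    unfolding eventually_at_right_field
  proof (intro exI[of _ "1/2"] conjI allI impI)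
    fix t :: real assume t: "0 < t" "t < 1/2"
    have "x + t *\<^sub>R (y - x) = (1 - 2*t) *\<^sub>R x + (2*t) *\<^sub>R m"
      by (simp add: m_def algebra_simps flip: scaleR_add_left)
    then have "g (x + t *\<^sub>R (y - x)) \<le> (1 - 2*t) * g x + (2*t) * g m"
      using convex_onD[OF strictly_convex_imp_convex_on[OF sc], of "2*t"] t by simp
    then have "g (x + t *\<^sub>R (y - x)) - g x \<le> 2 * (g m - g x) * t"
      by (simp add: algebra_simps)
    then show "(g (x + t *\<^sub>R (y - x)) - g x) / t \<le> 2 * (g m - g x)"
      using t by (simp add: pos_divide_le_eq)
  qed simp
  have "g' x (y - x) \<le> 2 * (g m - g x)"
    by (rule tendsto_upperbound[OF quotient_lim quotient_bound]) simp
  moreover have "g m < (1/2) * g y + (1 - 1/2) * g x"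
    unfolding m_def using \<open>x \<noteq> y\<close> by (intro sc[unfolded strictly_convex_def, rule_format]) auto
  ultimately show ?thesis by (simp add: bregman_def)
qed

lemma bregman_nonneg:
  assumes "strictly_convex g" "gateaux_deriv g g'"
  shows "0 \<le> bregman g g' y x"
  using bregman_pos[OF assms, of x y] by (cases "x = y") auto

lemma bregman_ray_mono:
  assumes sc: "strictly_convex g" and gd: "gateaux_deriv g g'" and s: "1 \<le> s"
  shows "bregman g g' (m + d) m \<le> bregman g g' (m + s *\<^sub>R d) m"
proof -
  have "m + d = (1 - 1/s) *\<^sub>R m + (1/s) *\<^sub>R (m + s *\<^sub>R d)"
    using s by (simp add: algebra_simps)
  then have "g (m + d) \<le> (1 - 1/s) * g m + (1/s) * g (m + s *\<^sub>R d)"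
    using convex_onD[OF strictly_convex_imp_convex_on[OF sc], of "1/s"] s by simp
  then have "bregman g g' (m + d) m \<le> (1/s) * bregman g g' (m + s *\<^sub>R d) m"
    using s unfolding bregman_def by (simp add: blinfun.scaleR_right algebra_simps)
  also have "\<dots> \<le> bregman g g' (m + s *\<^sub>R d) m"
    using mult_left_mono[OF s bregman_nonneg[OF sc gd, of "m + s *\<^sub>R d" m]] s
    by (simp add: divide_le_eq mult.commute)
  finally show ?thesis .
qed

lemma H2_bregman_lower_bound:
  assumes sc: "strictly_convex g" and gd: "gateaux_deriv g g'" and "H2 g g'"
    and "bounded A" and t: "0 < t"
  obtains c where "0 < c" "\<And>m y. m \<in> A \<Longrightarrow> t \<le> norm (y - m) \<Longrightarrow> c \<le> bregman g g' y m"
proof -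
  obtain c where "0 < c" and c: "\<And>m y. m \<in> A \<Longrightarrow> norm (y - m) = t \<Longrightarrow> c \<le> bregman g g' y m"
    using \<open>H2 g g'\<close>[unfolded H2_def, rule_format, OF conjI[OF \<open>bounded A\<close> t]] by blast
  have "c \<le> bregman g g' y m" if "m \<in> A" "t \<le> norm (y - m)" for m y
  proof -
    define r where "r = norm (y - m)"
    define d where "d = (t / r) *\<^sub>R (y - m)"
    have r: "0 < r" "t \<le> r" using that t unfolding r_def by auto
    \<comment> \<open>shrink y towards m onto the sphere of radius t, where H2 applies\<close>
    have "c \<le> bregman g g' (m + d) m"
      using c[OF \<open>m \<in> A\<close>] r t by (simp add: d_def r_def)
    also have "\<dots> \<le> bregman g g' (m + (r / t) *\<^sub>R d) m"
      using r t by (intro bregman_ray_mono[OF sc gd]) simp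
    also have "m + (r / t) *\<^sub>R d = y"
      using r t by (simp add: d_def)
    finally show ?thesis .
  qed
  with \<open>0 < c\<close> show ?thesis by (rule that)
qed

lemma bregman_midpoint_identity:
  "bregman g g' y v + bregman g g' w v - 2 * bregman g g' (midpoint y w) v
     = bregman g g' y (midpoint y w) + bregman g g' w (midpoint y w)"
proof -
  define m where "m = midpoint y w"
  have "y - v + (w - v) = 2 *\<^sub>R (m - v)"
    using midpoint_plus_self[of y w] by (simp add: m_def scaleR_2 algebra_simps)
  then have "g' v (y - v) + g' v (w - v) = 2 * g' v (m - v)"
    by (metis blinfun.add_right blinfun.scaleR_right real_scaleR_def)
  moreover have "w - m = - (y - m)"
    using midpoint_plus_self[of y w] by (simp add: m_def algebra_simps)
  then have "g' m (w - m) = - g' m (y - m)"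
    by (simp only: blinfun.minus_right)
  ultimately show ?thesis
    unfolding bregman_def m_def[symmetric] by (simp add: algebra_simps)
qed

lemma bregman_sublevel_bounded:
  assumes "H4 g"
  shows "bounded {u. bregman g g' u v \<le> r}"
proof -
  define \<rho> where "\<rho> = norm (g' v) + 1"
  have "\<rho> > 0" unfolding \<rho>_def by (simp add: add_nonneg_pos)
  then have "filterlim (\<lambda>u. g u - \<rho> * norm (u - v)) at_top at_infinity"
    using \<open>H4 g\<close> unfolding H4_def by blast
  then have "\<forall>\<^sub>F u in at_infinity. r + 1 + g v \<le> g u - \<rho> * norm (u - v)"
    unfolding filterlim_at_top by blast
  then obtain R where R: "\<And>u. R \<le> norm u \<Longrightarrow> r + 1 + g v \<le> g u - \<rho> * norm (u - v)"
    unfolding eventually_at_infinity by blast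
  have "norm u < R" if "bregman g g' u v \<le> r" for u
  proof (rule ccontr)
    assume "\<not> norm u < R"
    then have "r + 1 + g v \<le> g u - \<rho> * norm (u - v)" by (simp add: R)
    moreover have "g' v (u - v) \<le> \<rho> * norm (u - v)"
      using norm_blinfun[of "g' v" "u - v"] unfolding \<rho>_def by (simp add: distrib_right add_increasing2)
    ultimately show False
      using that unfolding bregman_def by linarith
  qed
  then show ?thesis
    by (intro bounded_subset[OF bounded_ball[of 0 R]]) auto
qed

lemma lsc_le_limit:
  fixes g :: "'a::metric_space \<Rightarrow> real"
  assumes "lsc g" and "X \<longlonglongrightarrow> y" and "(\<lambda>n. g (X n)) \<longlonglongrightarrow> L"
  shows "g y \<le> L"
proof (rule field_le_epsilon)
  fix \<epsilon> :: real assume "0 < \<epsilon>"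
  then have "\<forall>\<^sub>F u in at y. g y - \<epsilon> < g u"
    using \<open>lsc g\<close> unfolding lsc_def by simp
  then obtain d where "0 < d" and d: "\<And>u. u \<noteq> y \<Longrightarrow> dist u y < d \<Longrightarrow> g y - \<epsilon> < g u"
    unfolding eventually_at by blast
  have "\<forall>\<^sub>F n in sequentially. dist (X n) y < d"
    using \<open>X \<longlonglongrightarrow> y\<close> \<open>0 < d\<close> by (rule tendstoD)
  then have "\<forall>\<^sub>F n in sequentially. g y - \<epsilon> \<le> g (X n)"
  proof eventually_elim
    case (elim n)
    then show ?case using d[of "X n"] \<open>0 < \<epsilon>\<close> by (cases "X n = y") auto
  qed
  then have "g y - \<epsilon> \<le> L"
    by (rule tendsto_lowerbound[OF assms(3)]) simp
  then show "g y \<le> L + \<epsilon>" by simp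
qed

lemma bregman_minimizing_seq_Cauchy:
  assumes sc: "strictly_convex g" and gd: "gateaux_deriv g g'" and h2: "H2 g g'"
    and "convex Q" and XQ: "\<And>n. X n \<in> Q" and "bounded (range X)"
    and inf: "\<And>u. u \<in> Q \<Longrightarrow> \<mu> \<le> bregman g g' u v"
    and lim: "(\<lambda>n. bregman g g' (X n) v) \<longlonglongrightarrow> \<mu>"
  shows "Cauchy X"
proof (rule CauchyI)
  fix \<epsilon> :: real assume "0 < \<epsilon>"
  obtain R where R: "\<And>n. norm (X n) \<le> R"
    using \<open>bounded (range X)\<close> unfolding bounded_iff by blast
  obtain c where "0 < c"
    and c: "\<And>m y. m \<in> cball 0 R \<Longrightarrow> \<epsilon>/2 \<le> norm (y - m) \<Longrightarrow> c \<le> bregman g g' y m"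
    using H2_bregman_lower_bound[OF sc gd h2 bounded_cball[of 0 R], of "\<epsilon>/2"] \<open>0 < \<epsilon>\<close> by auto
  obtain M where M: "\<And>n. n \<ge> M \<Longrightarrow> bregman g g' (X n) v < \<mu> + c"
    using order_tendstoD(2)[OF lim, of "\<mu> + c"] \<open>0 < c\<close> unfolding eventually_sequentially by auto
  have "norm (X m - X n) < \<epsilon>" if "m \<ge> M" "n \<ge> M" for m n
  proof (rule ccontr)
    assume far: "\<not> norm (X m - X n) < \<epsilon>"
    define md where "md = midpoint (X m) (X n)"
    have "md \<in> Q"
      using closed_segment_subset[OF XQ[of m] XQ[of n] \<open>convex Q\<close>] midpoint_in_closed_segment
      unfolding md_def by blast
    have "md \<in> cball 0 R"
      using closed_segment_subset[OF _ _ convex_cball, of "X m" 0 R "X n"] R midpoint_in_closed_segment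
      unfolding md_def by (metis mem_cball_0 subsetD)
    have "c \<le> bregman g g' (X m) md" "c \<le> bregman g g' (X n) md"
      using far \<open>md \<in> cball 0 R\<close> dist_midpoint[of "X m" "X n"]
      by (auto intro!: c simp: md_def dist_norm norm_minus_commute)
    then show False
      using bregman_midpoint_identity[of g g' "X m" v "X n"] inf[OF \<open>md \<in> Q\<close>]
        M[OF \<open>m \<ge> M\<close>] M[OF \<open>n \<ge> M\<close>] unfolding md_def by linarith
  qed
  then show "\<exists>M. \<forall>m\<ge>M. \<forall>n\<ge>M. norm (X m - X n) < \<epsilon>" by blast
qed

lemma bregman_minimizer_unique:
  assumes sc: "strictly_convex g" and gd: "gateaux_deriv g g'" and "convex Q"
    and a: "a \<in> Q" "\<And>u. u \<in> Q \<Longrightarrow> bregman g g' a v \<le> bregman g g' u v"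
    and b: "b \<in> Q" "\<And>u. u \<in> Q \<Longrightarrow> bregman g g' b v \<le> bregman g g' u v"
  shows "a = b"
proof (rule ccontr)
  assume "a \<noteq> b"
  have "midpoint a b \<in> Q"
    using closed_segment_subset[OF a(1) b(1) \<open>convex Q\<close>] midpoint_in_closed_segment by blast
  moreover have "0 < bregman g g' a (midpoint a b)"
    using \<open>a \<noteq> b\<close> by (intro bregman_pos[OF sc gd]) simp
  ultimately show False
    using bregman_midpoint_identity[of g g' a v b] bregman_nonneg[OF sc gd, of b "midpoint a b"]
      a(2) b(2) by fastforce
qed

lemma minimizing_sequence_exists:
  fixes \<phi> :: "'a \<Rightarrow> real"
  assumes "Q \<noteq> {}" "bdd_below (\<phi> ` Q)"
  obtains X where "\<And>n. X n \<in> Q" "(\<lambda>n. \<phi> (X n)) \<longlonglongrightarrow> Inf (\<phi> ` Q)"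
proof -
  have "Inf (\<phi> ` Q) \<in> closure (\<phi> ` Q)"
    using assms by (intro closure_contains_Inf) auto
  then obtain d where d: "\<And>n. d n \<in> \<phi> ` Q" and "d \<longlonglongrightarrow> Inf (\<phi> ` Q)"
    unfolding closure_sequential by blast
  have "\<forall>n. \<exists>u. u \<in> Q \<and> d n = \<phi> u"
    using d by blast
  then obtain X where X: "\<And>n. X n \<in> Q \<and> d n = \<phi> (X n)"
    by (metis choice)
  then have "d = (\<lambda>n. \<phi> (X n))"
    by auto
  with X \<open>d \<longlonglongrightarrow> Inf (\<phi> ` Q)\<close> show ?thesis
    by (intro that) auto
qed

lemma bregman_minimizer_exists:
  fixes g :: "'e::banach \<Rightarrow> real"
  assumes sc: "strictly_convex g" and gd: "gateaux_deriv g g'" and "lsc g" "H2 g g'" "H4 g"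
    and "Q \<noteq> {}" "closed Q" "convex Q"
  obtains y where "y \<in> Q" "\<And>u. u \<in> Q \<Longrightarrow> bregman g g' y v \<le> bregman g g' u v"
proof -
  define \<mu> where "\<mu> = Inf ((\<lambda>u. bregman g g' u v) ` Q)"
  have bdd: "bdd_below ((\<lambda>u. bregman g g' u v) ` Q)"
    using bregman_nonneg[OF sc gd] unfolding bdd_below_def by blast
  then have inf: "\<mu> \<le> bregman g g' u v" if "u \<in> Q" for u
    unfolding \<mu>_def using that by (simp add: cInf_lower)
  obtain X where XQ: "\<And>n. X n \<in> Q" and lim: "(\<lambda>n. bregman g g' (X n) v) \<longlonglongrightarrow> \<mu>"
    using minimizing_sequence_exists[OF \<open>Q \<noteq> {}\<close> bdd] unfolding \<mu>_def by blast
  obtain B where "\<And>n. bregman g g' (X n) v \<le> B"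
    using convergent_imp_bounded[OF lim] unfolding bounded_iff by (auto simp: abs_le_iff)
  then have "bounded (range X)"
    by (intro bounded_subset[OF bregman_sublevel_bounded[OF \<open>H4 g\<close>, of g' v B]]) auto
  then have "Cauchy X"
    using bregman_minimizing_seq_Cauchy[OF sc gd \<open>H2 g g'\<close> \<open>convex Q\<close> XQ _ inf lim] by blast
  then obtain y where "X \<longlonglongrightarrow> y"
    using Cauchy_convergent_iff convergent_def by blast
  have "y \<in> Q"
    using closed_sequentially[OF \<open>closed Q\<close> XQ \<open>X \<longlonglongrightarrow> y\<close>] .
  have "(\<lambda>n. g (X n)) \<longlonglongrightarrow> \<mu> + g v + g' v (y - v)"
  proof -
    have "(\<lambda>n. bregman g g' (X n) v + g v + g' v (X n - v)) \<longlonglongrightarrow> \<mu> + g v + g' v (y - v)"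
      by (intro tendsto_intros lim \<open>X \<longlonglongrightarrow> y\<close>)
    then show ?thesis by (simp add: bregman_def)
  qed
  from lsc_le_limit[OF \<open>lsc g\<close> \<open>X \<longlonglongrightarrow> y\<close> this] have "bregman g g' y v \<le> \<mu>"
    by (simp add: bregman_def)
  then show ?thesis
    using that \<open>y \<in> Q\<close> inf by fastforce
qed

lemma bproj_mem:
  fixes g :: "'e::banach \<Rightarrow> real"
  assumes "in_F g g'" "H2 g g'" "H4 g" "Q \<noteq> {}" "closed Q" "convex Q"
  shows "bproj g g' Q v \<in> Q"
proof -
  have sc: "strictly_convex g" and "lsc g" and gd: "gateaux_deriv g g'"
    using \<open>in_F g g'\<close> by (simp_all add: in_F_def)
  obtain y where y: "y \<in> Q" "\<And>u. u \<in> Q \<Longrightarrow> bregman g g' y v \<le> bregman g g' u v"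
    using bregman_minimizer_exists[OF sc gd \<open>lsc g\<close> assms(2-)] by blast
  then have "bproj g g' Q v = y"
    unfolding bproj_def
    by (intro the_equality) (auto intro: bregman_minimizer_unique[OF sc gd \<open>convex Q\<close>])
  with y show ?thesis by simp
qed

lemma interior_cone_add:
  fixes C :: "'a::real_normed_vector set"
  assumes "convex C" "cone C" "p \<in> interior C" "c \<in> C"
  shows "p + c \<in> interior C"
proof -
  have "(\<lambda>q. c + q) ` interior C \<subseteq> C"
    using assms(1,2,4) interior_subset convex_cone[of C] by blast
  then have "(\<lambda>q. c + q) ` interior C \<subseteq> interior C"
    by (intro interior_maximal open_translation open_interior)
  then show ?thesis
    using assms(3) by (auto simp: add.commute)
qed

lemma interior_cone_scaleR:
  fixes C :: "'a::real_normed_vector set"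
  assumes "cone C" "p \<in> interior C" "0 < s"
  shows "s *\<^sub>R p \<in> interior C"
proof -
  have "(\<lambda>q. s *\<^sub>R q) ` interior C \<subseteq> C"
    using assms(1,3) interior_subset[of C] unfolding cone_def by (auto simp: less_imp_le)
  then have "(\<lambda>q. s *\<^sub>R q) ` interior C \<subseteq> interior C"
    using assms(3) by (intro interior_maximal open_scaling open_interior) auto
  then show ?thesis
    using assms(2) by blast
qed

lemma B2_imp_isCont:
  assumes "B2 f"
  shows "isCont (\<lambda>y. f y w) x"
proof -
  have "bounded (ball x 1 \<times> {w})"
    by (simp add: bounded_Times)
  then have "continuous_on (ball x 1 \<times> {w}) (\<lambda>(a, b). f a b)"
    using assms unfolding B2_def by (simp add: uniformly_continuous_imp_continuous)
  then have "continuous_on (ball x 1) (\<lambda>y. (\<lambda>(a, b). f a b) (y, w))"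
    by (rule continuous_on_compose2) (auto intro: continuous_intros)
  then have "continuous_on (ball x 1) (\<lambda>y. f y w)"
    by simp
  then show ?thesis
    by (rule continuous_on_interior) (simp add: interior_open)
qed

lemma wargmin_bregman_gap:
  fixes g' :: "'e::real_normed_vector \<Rightarrow> 'e \<Rightarrow>\<^sub>L real"
  assumes "z \<in> wargmin C (\<lambda>y. \<beta> *\<^sub>R f x y + g y *\<^sub>R e - g' x y *\<^sub>R e) Q"
    and "x \<in> Q" "f x x = 0"
  shows "\<beta> *\<^sub>R f x z + bregman g g' z x *\<^sub>R e \<notin> interior C"
proof -
  have "(\<beta> *\<^sub>R f x z + g z *\<^sub>R e - g' x z *\<^sub>R e) - (\<beta> *\<^sub>R f x x + g x *\<^sub>R e - g' x x *\<^sub>R e)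
      = \<beta> *\<^sub>R f x z + bregman g g' z x *\<^sub>R e"
    using \<open>f x x = 0\<close> by (simp add: bregman_def blinfun.diff_right algebra_simps)
  then show ?thesis
    using assms(1,2) unfolding wargmin_def by (metis (no_types, lifting) mem_Collect_eq)
qed

lemma armijo_search_terminates:
  fixes f :: "'e::real_normed_vector \<Rightarrow> 'e \<Rightarrow> 'y::real_normed_vector"
  assumes C: "closed C" "convex C" "cone C" "e \<in> interior C"
    and "\<delta> < 1" "0 < D"
    and "Y \<longlonglongrightarrow> x" "isCont (\<lambda>y. f y x) x" "isCont (\<lambda>y. f y z) x" "f x x = 0"
    and gap: "\<beta> *\<^sub>R f x z + D *\<^sub>R e \<notin> interior C"
  shows "\<exists>l. - \<beta> *\<^sub>R f (Y l) x + \<beta> *\<^sub>R f (Y l) z + (\<delta> * D) *\<^sub>R e \<notin> interior C"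
proof (rule ccontr)
  assume "\<not> ?thesis"
  then have "- \<beta> *\<^sub>R f (Y l) x + \<beta> *\<^sub>R f (Y l) z + (\<delta> * D) *\<^sub>R e \<in> C" for l
    using interior_subset by blast
  moreover have "(\<lambda>l. - \<beta> *\<^sub>R f (Y l) x + \<beta> *\<^sub>R f (Y l) z + (\<delta> * D) *\<^sub>R e)
      \<longlonglongrightarrow> - \<beta> *\<^sub>R f x x + \<beta> *\<^sub>R f x z + (\<delta> * D) *\<^sub>R e"
    using assms(7-9) by (intro tendsto_intros isCont_tendsto_compose[of _ "\<lambda>y. f y _"])
  ultimately have "- \<beta> *\<^sub>R f x x + \<beta> *\<^sub>R f x z + (\<delta> * D) *\<^sub>R e \<in> C"
    by (rule closed_sequentially[OF \<open>closed C\<close>])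
  then have "\<beta> *\<^sub>R f x z + (\<delta> * D) *\<^sub>R e \<in> C"
    using \<open>f x x = 0\<close> by simp
  moreover have "((1 - \<delta>) * D) *\<^sub>R e \<in> interior C"
    using interior_cone_scaleR[OF \<open>cone C\<close> \<open>e \<in> interior C\<close>] \<open>\<delta> < 1\<close> \<open>0 < D\<close> by simp
  ultimately have "((1 - \<delta>) * D) *\<^sub>R e + (\<beta> *\<^sub>R f x z + (\<delta> * D) *\<^sub>R e) \<in> interior C"
    by (intro interior_cone_add[OF \<open>convex C\<close> \<open>cone C\<close>])
  moreover have "((1 - \<delta>) * D) *\<^sub>R e + (\<beta> *\<^sub>R f x z + (\<delta> * D) *\<^sub>R e) = \<beta> *\<^sub>R f x z + D *\<^sub>R e"
    by (simp add: algebra_simps)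
  ultimately show False
    using gap by simp
qed

lemma armijo_step_not_in_neg_cone:
  fixes f :: "'e::real_vector \<Rightarrow> 'e \<Rightarrow> 'y::real_normed_vector"
  assumes C: "convex C" "cone C" and "p \<in> interior C"
    and "0 \<le> \<beta>" "0 < \<alpha>" "\<alpha> \<le> 1" "C_convex C (f y)" "f y y = 0"
    and y: "y = \<alpha> *\<^sub>R z + (1 - \<alpha>) *\<^sub>R x"
    and accepted: "- \<beta> *\<^sub>R f y x + \<beta> *\<^sub>R f y z + p \<notin> interior C"
  shows "f y x \<notin> uminus ` C"
proof
  assume "f y x \<in> uminus ` C"
  then obtain c where "c \<in> C" and c: "f y x = - c" by blast
  have C_add: "a + b \<in> C" if "a \<in> C" "b \<in> C" for a b
    using that C convex_cone[of C] by blast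
  have C_scale: "s *\<^sub>R a \<in> C" if "a \<in> C" "0 \<le> s" for a s
    using that \<open>cone C\<close> unfolding cone_def by blast
  have "\<alpha> *\<^sub>R f y z + (1 - \<alpha>) *\<^sub>R f y x - f y y \<in> C"
    using \<open>C_convex C (f y)\<close> \<open>0 < \<alpha>\<close> \<open>\<alpha> \<le> 1\<close> y unfolding C_convex_def by auto
  then have "\<alpha> *\<^sub>R f y z - (1 - \<alpha>) *\<^sub>R c \<in> C"
    using \<open>f y y = 0\<close> c by simp
  then have "\<alpha> *\<^sub>R f y z - (1 - \<alpha>) *\<^sub>R c + (1 - \<alpha>) *\<^sub>R c \<in> C"
    using \<open>c \<in> C\<close> \<open>\<alpha> \<le> 1\<close> by (intro C_add C_scale) auto
  then have "f y z \<in> C"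
    using C_scale[of "\<alpha> *\<^sub>R f y z" "1 / \<alpha>"] \<open>0 < \<alpha>\<close> by simp
  then have "p + \<beta> *\<^sub>R (c + f y z) \<in> interior C"
    using interior_cone_add[OF C \<open>p \<in> interior C\<close>] C_add C_scale \<open>c \<in> C\<close> \<open>0 \<le> \<beta>\<close> by blast
  then show False
    using accepted c by (simp add: algebra_simps)
qed

lemma armijo_linesearch:
  fixes f :: "'e::real_normed_vector \<Rightarrow> 'e \<Rightarrow> 'y::real_normed_vector"
  assumes C: "closed C" "convex C" "cone C" "e \<in> interior C"
    and f: "B1 f" "B2 f" "B3 C f"
    and par: "0 < \<delta>" "\<delta> < 1" "0 < \<theta>" "\<theta> < 1" "0 \<le> \<beta>"
    and D: "0 \<le> D" "D = 0 \<Longrightarrow> x = z"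
    and gap: "\<beta> *\<^sub>R f x z + D *\<^sub>R e \<notin> interior C"
  shows "(\<exists>l::nat. - \<beta> *\<^sub>R f (\<theta> ^ l *\<^sub>R z + (1 - \<theta> ^ l) *\<^sub>R x) x
                   + \<beta> *\<^sub>R f (\<theta> ^ l *\<^sub>R z + (1 - \<theta> ^ l) *\<^sub>R x) z
                   + (\<delta> * D) *\<^sub>R e \<notin> interior C)
       \<and> (x \<noteq> z \<longrightarrow>
           (let l = (LEAST l::nat. - \<beta> *\<^sub>R f (\<theta> ^ l *\<^sub>R z + (1 - \<theta> ^ l) *\<^sub>R x) x
                   + \<beta> *\<^sub>R f (\<theta> ^ l *\<^sub>R z + (1 - \<theta> ^ l) *\<^sub>R x) z
                   + (\<delta> * D) *\<^sub>R e \<notin> interior C);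
                \<alpha> = \<theta> ^ l;
                yk = \<alpha> *\<^sub>R z + (1 - \<alpha>) *\<^sub>R x
            in f yk x \<notin> uminus ` C))"
proof -
  have f_diag: "\<And>a. f a a = 0"
    using f(1) by (simp add: B1_def)
  define Y where "Y l = \<theta> ^ l *\<^sub>R z + (1 - \<theta> ^ l) *\<^sub>R x" for l :: nat
  define rejected where "rejected l \<longleftrightarrow>
      - \<beta> *\<^sub>R f (Y l) x + \<beta> *\<^sub>R f (Y l) z + (\<delta> * D) *\<^sub>R e \<in> interior C" for l
  have search: "\<exists>l. \<not> rejected l"
  proof (cases "D = 0")
    case True
    then show ?thesis
      using gap f_diag D(2) by (auto simp: rejected_def Y_def)
  next
    case False
    have "Y \<longlonglongrightarrow> 0 *\<^sub>R z + (1 - 0) *\<^sub>R x"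
      unfolding Y_def using par(3,4) by (intro tendsto_intros LIMSEQ_power_zero) auto
    then show ?thesis
      using armijo_search_terminates[OF C par(2) _ _ B2_imp_isCont[OF f(2)] B2_imp_isCont[OF f(2)]
          f_diag gap] False D(1)
      unfolding rejected_def by simp
  qed
  define L where "L = (LEAST l. \<not> rejected l)"
  have "f (Y L) x \<notin> uminus ` C" if "x \<noteq> z"
  proof (rule armijo_step_not_in_neg_cone[OF C(2,3), where \<alpha> = "\<theta> ^ L" and z = z])
    show "(\<delta> * D) *\<^sub>R e \<in> interior C"
      using interior_cone_scaleR[OF C(3,4)] par(1) D that by force
    show "- \<beta> *\<^sub>R f (Y L) x + \<beta> *\<^sub>R f (Y L) z + (\<delta> * D) *\<^sub>R e \<notin> interior C"
      using LeastI_ex[OF search] unfolding L_def rejected_def by simp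
    show "C_convex C (f (Y L))"
      using f(3) by (simp add: B3_def)
  qed (use par f_diag in \<open>auto simp: Y_def power_le_one\<close>)
  with search show ?thesis
    unfolding L_def rejected_def Y_def Let_def by simp
qed

theorem proposition3p6:
  fixes f :: "'e::banach \<Rightarrow> 'e \<Rightarrow> 'y::banach"
    and K :: "'e set" and C :: "'y set" and T :: "'e \<Rightarrow> 'e set"
    and g :: "'e \<Rightarrow> real" and g' :: "'e \<Rightarrow> ('e \<Rightarrow>\<^sub>L real)"
    and \<delta> \<theta> \<beta> \<beta>_lo \<beta>_hi :: real and e :: 'y and v x z :: 'e
  assumes K: "K \<noteq> {}" "closed K" "convex K"
    and C: "closed C" "convex C" "cone C" "\<forall>y. y \<in> C \<and> - y \<in> C \<longrightarrow> y = 0" "interior C \<noteq> {}"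
    and T: "\<forall>u\<in>K. T u \<subseteq> K"
    and g: "in_F g g'" "H1 g g'" "H2 g g'" "H3 g g'" "H4 g"
    and B: "B1 f" "B2 f" "B3 C f" "B4 g g' K T"
    and par: "0 < \<delta>" "\<delta> < 1" "0 < \<theta>" "\<theta> < 1" "0 < \<beta>_lo" "\<beta>_lo \<le> \<beta>_hi"
      "\<beta>_lo \<le> \<beta>" "\<beta> \<le> \<beta>_hi" "e \<in> interior C"
    and v: "v \<in> K"
    and x: "x = bproj g g' (T v) v"
    and z: "z \<in> wargmin C (\<lambda>y. \<beta> *\<^sub>R f x y + g y *\<^sub>R e - blinfun_apply (g' x) y *\<^sub>R e) (T v)"
    and nostop: "z \<noteq> v"
  shows "(\<exists>l::nat. - \<beta> *\<^sub>R f (\<theta> ^ l *\<^sub>R z + (1 - \<theta> ^ l) *\<^sub>R x) x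
                   + \<beta> *\<^sub>R f (\<theta> ^ l *\<^sub>R z + (1 - \<theta> ^ l) *\<^sub>R x) z
                   + (\<delta> * bregman g g' z x) *\<^sub>R e \<notin> interior C)
       \<and> (x \<noteq> z \<longrightarrow>
           (let l = (LEAST l::nat. - \<beta> *\<^sub>R f (\<theta> ^ l *\<^sub>R z + (1 - \<theta> ^ l) *\<^sub>R x) x
                   + \<beta> *\<^sub>R f (\<theta> ^ l *\<^sub>R z + (1 - \<theta> ^ l) *\<^sub>R x) z
                   + (\<delta> * bregman g g' z x) *\<^sub>R e \<notin> interior C);
                \<alpha> = \<theta> ^ l;
                yk = \<alpha> *\<^sub>R z + (1 - \<alpha>) *\<^sub>R x
            in f yk x \<notin> uminus ` C))"
proof -
  have sc: "strictly_convex g" and gd: "gateaux_deriv g g'"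
    using g(1) by (simp_all add: in_F_def)
  have "T v \<noteq> {}" "closed (T v)" "convex (T v)"
    using B(4) v by (simp_all add: B4_def)
  then have "x \<in> T v"
    unfolding x by (rule bproj_mem[OF g(1) g(3) g(5)])
  with z have "\<beta> *\<^sub>R f x z + bregman g g' z x *\<^sub>R e \<notin> interior C"
    by (rule wargmin_bregman_gap) (use B(1) in \<open>simp add: B1_def\<close>)
  moreover have "0 \<le> bregman g g' z x"
    using bregman_nonneg[OF sc gd] .
  moreover have "bregman g g' z x = 0 \<Longrightarrow> x = z"
    using bregman_pos[OF sc gd, of x z] by force
  moreover have "0 \<le> \<beta>"
    using par(5,7) by simp
  ultimately show ?thesis
    using armijo_linesearch[OF C(1-3) par(9) B(1-3) par(1-4)] by blast
qed

end
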